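(* Let $\omega\in\mathbb{F}_{q^n}$ and let $\mathbb{F}_{q^k}=\mathbb{F}_q(\omega)$ be the smallest subfield of $\mathbb{F}_{q^n}$ containing $\omega$. Then the smallest subplane (over a subfield $\mathbb{F}_{q^j}$, $j\mid n$) of $\mathrm{PG}(2,q^n)$ that is secant to $l_\infty$ and contains $\pi_{\omega,0}$ is an $\mathbb{F}_{q^k}$-subplane.
   Context: Points of $\mathrm{PG}(2,q^n)$ are written $(a,b,c)_{\mathbb{F}_{q^n}}$; $l_\infty$ is the line $c=0$. For $j\mid n$, an $\mathbb{F}_{q^j}$-subplane is a set $\{(su+tv+wz)_{\mathbb{F}_{q^n}}:(s,t,w)\in\mathbb{F}_{q^j}^3\setminus\{0\}\}$ for $\mathbb{F}_{q^n}$-independent $u,v,z\in\mathbb{F}_{q^n}^3$; it is secant to $l_\infty$ if it meets $l_\infty$ in $q^j+1$ points. For $\omega\in\mathbb{F}_{q^n}$, $\pi_{\omega,0}=\{(s,u,u\omega+t)_{\mathbb{F}_{q^n}}:(s,t,u)\in\mathbb{F}_q^3\setminus\{0\}\}$. *)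

theory Defs
  imports Main
begin

definition is_subfield :: "'a::field set \<Rightarrow> bool" where
  "is_subfield K \<longleftrightarrow> 0 \<in> K \<and> 1 \<in> K \<and>
     (\<forall>x\<in>K. \<forall>y\<in>K. x + y \<in> K \<and> x * y \<in> K) \<and>
     (\<forall>x\<in>K. - x \<in> K) \<and> (\<forall>x\<in>K. x \<noteq> 0 \<longrightarrow> inverse x \<in> K)"

definition gen_subfield :: "'a::field set \<Rightarrow> 'a \<Rightarrow> 'a set" where
  "gen_subfield F \<omega> = \<Inter>{K. is_subfield K \<and> F \<subseteq> K \<and> \<omega> \<in> K}"

type_synonym 'a vec3 = "'a \<times> 'a \<times> 'a"

definition vsmult :: "'a::field \<Rightarrow> 'a vec3 \<Rightarrow> 'a vec3" where
  "vsmult c v = (c * fst v, c * fst (snd v), c * snd (snd v))"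

definition vadd :: "'a::field vec3 \<Rightarrow> 'a vec3 \<Rightarrow> 'a vec3" where
  "vadd v w = (fst v + fst w, fst (snd v) + fst (snd w), snd (snd v) + snd (snd w))"

text \<open>The projective point (v) of PG(2,F) for the ambient field: the 1-dimensional span of v.\<close>
definition pt :: "'a::field vec3 \<Rightarrow> 'a vec3 set" where
  "pt v = {vsmult c v | c. True}"

definition lin_indep3 :: "'a::field vec3 \<Rightarrow> 'a vec3 \<Rightarrow> 'a vec3 \<Rightarrow> bool" where
  "lin_indep3 u v z \<longleftrightarrow> (\<forall>a b c. vadd (vadd (vsmult a u) (vsmult b v)) (vsmult c z) = (0,0,0)
      \<longrightarrow> a = 0 \<and> b = 0 \<and> c = 0)"

definition subplane :: "'a::field set \<Rightarrow> 'a vec3 \<Rightarrow> 'a vec3 \<Rightarrow> 'a vec3 \<Rightarrow> 'a vec3 set set" where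
  "subplane K u v z = {pt (vadd (vadd (vsmult s u) (vsmult t v)) (vsmult w z)) | s t w.
      s \<in> K \<and> t \<in> K \<and> w \<in> K \<and> (s, t, w) \<noteq> (0, 0, 0)}"

definition is_subplane_over :: "'a::field set \<Rightarrow> 'a vec3 set set \<Rightarrow> bool" where
  "is_subplane_over K S \<longleftrightarrow> (\<exists>u v z. lin_indep3 u v z \<and> S = subplane K u v z)"

definition l_inf :: "'a::field vec3 set set" where
  "l_inf = {pt (a, b, 0) | a b. (a, b) \<noteq> (0, 0)}"

definition secant :: "'a::field set \<Rightarrow> 'a vec3 set set \<Rightarrow> bool" where
  "secant K S \<longleftrightarrow> card (S \<inter> l_inf) = card K + 1"

definition pi_omega0 :: "'a::field set \<Rightarrow> 'a \<Rightarrow> 'a vec3 set set" where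
  "pi_omega0 F \<omega> = {pt (s, u, u * \<omega> + t) | s t u.
      s \<in> F \<and> t \<in> F \<and> u \<in> F \<and> (s, t, u) \<noteq> (0, 0, 0)}"

end

theory Submission
  imports Defs
begin

(* Let L = F(omega).  Over the three vectors
     e1 = (1,0,0),  v = (0,1,omega),  e3 = (0,0,1)
   the point (s,u,u*omega+t) of pi_omega0 is the combination s*e1 + u*v + t*e3, so
   pi_omega0 F omega is contained in the L-subplane S0 spanned by e1, v, e3.  S0 meets
   l_inf in the |L|+1 points (1,0,0), (s,1,0) with s in L, hence is secant.
   Conversely let S be any K-subplane that contains pi_omega0 and is secant.  It contains
   the frame e1, v, e3, e1+v+e3 of pi_omega0, and a subplane is determined by a frame
   ("frame lemma", proved with 3x3 determinants and Cramer's rule), so S is the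
   K-subplane spanned by e1, v, e3.  The points (f,0,1), f in F, force F to lie in K, and
   if omega were not in K this subplane would meet l_inf in (1,0,0) only, contradicting
   secancy.  Hence L is contained in K and S0 lies in S.  Finally, |L| = q^k with k | n
   because every finite field extension is a vector space: a subset closed under
   addition and K-scalars has cardinality a power of |K|. *)

definition lincomb :: "'a::field vec3 \<Rightarrow> 'a vec3 \<Rightarrow> 'a vec3 \<Rightarrow> 'a vec3 \<Rightarrow> 'a vec3" where
  "lincomb u v z a = vadd (vadd (vsmult (fst a) u) (vsmult (fst (snd a)) v)) (vsmult (snd (snd a)) z)"

definition det3 :: "'a::field vec3 \<Rightarrow> 'a vec3 \<Rightarrow> 'a vec3 \<Rightarrow> 'a" where
  "det3 x y z = fst x * (fst (snd y) * snd (snd z) - snd (snd y) * fst (snd z))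
              - fst (snd x) * (fst y * snd (snd z) - snd (snd y) * fst z)
              + snd (snd x) * (fst y * fst (snd z) - fst (snd y) * fst z)"

lemma lincomb_smult: "lincomb u v z (vsmult k a) = vsmult k (lincomb u v z a)"
  by (simp add: lincomb_def vadd_def vsmult_def algebra_simps)

lemma lincomb_zero: "lincomb u v z (0,0,0) = (0,0,0)"
  by (simp add: lincomb_def vadd_def vsmult_def)

lemma lincomb_comp:
  "lincomb (lincomb u v z a1) (lincomb u v z a2) (lincomb u v z a3) x = lincomb u v z (lincomb a1 a2 a3 x)"
  by (simp add: lincomb_def vadd_def vsmult_def algebra_simps)

lemma lincomb_scaled_vectors:
  "lincomb (vsmult c1 a1) (vsmult c2 a2) (vsmult c3 a3) (x1,x2,x3) = lincomb a1 a2 a3 (c1*x1, c2*x2, c3*x3)"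
  by (simp add: lincomb_def vadd_def vsmult_def algebra_simps)

lemma lincomb_scaled_all:
  "lincomb (vsmult c u) (vsmult c v) (vsmult c z) a = vsmult c (lincomb u v z a)"
  by (simp add: lincomb_def vadd_def vsmult_def algebra_simps)

lemma det3_mult:
  "det3 (lincomb u v z a1) (lincomb u v z a2) (lincomb u v z a3) = det3 u v z * det3 a1 a2 a3"
  unfolding det3_def lincomb_def vadd_def vsmult_def by simp algebra

lemma det3_smult: "det3 (vsmult c1 a1) (vsmult c2 a2) (vsmult c3 a3) = c1*c2*c3*det3 a1 a2 a3"
  by (simp add: det3_def vsmult_def algebra_simps)

lemma det3_zero_column:
  "det3 (0,0,0) y z = 0" "det3 x (0,0,0) z = 0" "det3 x y (0,0,0) = 0"
  by (simp_all add: det3_def)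

lemma det3_lincomb:
  "det3 (lincomb y1 y2 y3 k) y2 y3 = fst k * det3 y1 y2 y3"
  "det3 y1 (lincomb y1 y2 y3 k) y3 = fst (snd k) * det3 y1 y2 y3"
  "det3 y1 y2 (lincomb y1 y2 y3 k) = snd (snd k) * det3 y1 y2 y3"
  unfolding det3_def lincomb_def vadd_def vsmult_def by (simp_all, algebra+)

lemma cramer_identity:
  "vsmult (det3 a1 a2 a3) b = lincomb a1 a2 a3 (det3 b a2 a3, det3 a1 b a3, det3 a1 a2 b)"
  unfolding det3_def lincomb_def vadd_def vsmult_def by (simp add: prod_eq_iff) algebra

lemma lincomb_inj:
  assumes d: "det3 u v z \<noteq> 0" and eq: "lincomb u v z a = lincomb u v z b"
  shows "a = b"
proof -
  have "fst a * det3 u v z = fst b * det3 u v z"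
    "fst (snd a) * det3 u v z = fst (snd b) * det3 u v z"
    "snd (snd a) * det3 u v z = snd (snd b) * det3 u v z"
    by (metis det3_lincomb eq)+
  with d show ?thesis by (simp add: prod_eq_iff)
qed

lemma lincomb_eq_zero_iff: "det3 u v z \<noteq> 0 \<Longrightarrow> lincomb u v z a = (0,0,0) \<longleftrightarrow> a = (0,0,0)"
  using lincomb_inj[of u v z a "(0,0,0)"] by (auto simp: lincomb_zero)

lemma subfield_closed:
  assumes "is_subfield K"
  shows "0 \<in> K" "1 \<in> K" "x \<in> K \<Longrightarrow> y \<in> K \<Longrightarrow> x + y \<in> K" "x \<in> K \<Longrightarrow> y \<in> K \<Longrightarrow> x * y \<in> K"
    "x \<in> K \<Longrightarrow> - x \<in> K" "x \<in> K \<Longrightarrow> inverse x \<in> K"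
proof -
  show "0 \<in> K" "1 \<in> K" "x \<in> K \<Longrightarrow> y \<in> K \<Longrightarrow> x + y \<in> K"
    "x \<in> K \<Longrightarrow> y \<in> K \<Longrightarrow> x * y \<in> K" "x \<in> K \<Longrightarrow> - x \<in> K"
    using assms unfolding is_subfield_def by blast+
  show "x \<in> K \<Longrightarrow> inverse x \<in> K"
    using assms unfolding is_subfield_def by (cases "x = 0") auto
qed

lemma subfield_diff_divide:
  assumes "is_subfield K" "x \<in> K" "y \<in> K"
  shows "x - y \<in> K" "x / y \<in> K"
  using subfield_closed[OF assms(1)] assms(2,3)
  by (metis diff_conv_add_uminus, metis divide_inverse)

lemma card_subfield_ge2: "is_subfield (K::'a::{field,finite} set) \<Longrightarrow> card K \<ge> 2"
proof -
  assume "is_subfield K"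
  then have "{0, 1} \<subseteq> K" using subfield_closed(1,2) by blast
  then have "card {0::'a, 1} \<le> card K" by (intro card_mono) simp_all
  then show ?thesis by simp
qed

definition inK3 :: "'a::field set \<Rightarrow> 'a vec3 \<Rightarrow> bool" where
  "inK3 K a \<longleftrightarrow> fst a \<in> K \<and> fst (snd a) \<in> K \<and> snd (snd a) \<in> K"

lemma det3_in_K: "is_subfield K \<Longrightarrow> inK3 K a \<Longrightarrow> inK3 K b \<Longrightarrow> inK3 K c \<Longrightarrow> det3 a b c \<in> K"
  unfolding det3_def inK3_def by (simp add: subfield_closed subfield_diff_divide)

lemma lincomb_in_K:
  "is_subfield K \<Longrightarrow> inK3 K a \<Longrightarrow> inK3 K b \<Longrightarrow> inK3 K c \<Longrightarrow> inK3 K x \<Longrightarrow> inK3 K (lincomb a b c x)"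
  unfolding lincomb_def inK3_def vadd_def vsmult_def by (simp add: subfield_closed)

lemma inK3_smult: "is_subfield K \<Longrightarrow> c \<in> K \<Longrightarrow> inK3 K a \<Longrightarrow> inK3 K (vsmult c a)"
  unfolding inK3_def vsmult_def by (simp add: subfield_closed)

lemma cramer_in_K:
  assumes K: "is_subfield K" and a: "inK3 K a1" "inK3 K a2" "inK3 K a3"
    and d: "det3 a1 a2 a3 \<noteq> 0" and b: "inK3 K b"
  shows "\<exists>x. inK3 K x \<and> b = lincomb a1 a2 a3 x"
proof -
  define D where "D = det3 a1 a2 a3"
  define x where "x = (det3 b a2 a3 / D, det3 a1 b a3 / D, det3 a1 a2 b / D)"
  have "b = vsmult (1 / D) (vsmult D b)" using d by (simp add: D_def vsmult_def)
  also have "\<dots> = lincomb a1 a2 a3 x"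
    unfolding D_def cramer_identity lincomb_smult[symmetric] x_def by (simp add: vsmult_def)
  finally have "b = lincomb a1 a2 a3 x" .
  moreover have "inK3 K x" unfolding x_def inK3_def D_def
    using K a b by (simp add: det3_in_K subfield_diff_divide)
  ultimately show ?thesis by blast
qed

lemma coordinates_in_K:
  assumes K: "is_subfield K" and a: "inK3 K a1" "inK3 K a2" "inK3 K a3"
    and d: "det3 a1 a2 a3 \<noteq> 0" and b: "inK3 K (lincomb a1 a2 a3 x)"
  shows "inK3 K x"
proof -
  obtain y where "inK3 K y" "lincomb a1 a2 a3 x = lincomb a1 a2 a3 y"
    using cramer_in_K[OF K a d b] by blast
  then show ?thesis using lincomb_inj[OF d] by metis
qed

lemma pt_smult: "c \<noteq> 0 \<Longrightarrow> pt (vsmult c x) = pt x"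
proof -
  assume c: "c \<noteq> 0"
  have "vsmult a (vsmult c x) = vsmult (a*c) x" for a by (simp add: vsmult_def mult.assoc)
  moreover have "vsmult a x = vsmult (a / c) (vsmult c x)" for a using c by (simp add: vsmult_def)
  ultimately show ?thesis unfolding pt_def by blast
qed

lemma vsmult_eq_zero_iff: "vsmult c x = (0,0,0) \<longleftrightarrow> c = 0 \<or> x = (0,0,0)"
  by (cases x) (auto simp: vsmult_def)

lemma pt_eq: "pt x = pt y \<Longrightarrow> x \<noteq> (0,0,0) \<Longrightarrow> \<exists>c. c \<noteq> 0 \<and> x = vsmult c y"
proof -
  assume e: "pt x = pt y" and x: "x \<noteq> (0,0,0)"
  have "x \<in> pt x" unfolding pt_def by (rule CollectI, rule exI[of _ 1]) (simp add: vsmult_def)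
  then obtain c where "x = vsmult c y" using e unfolding pt_def by auto
  with x show ?thesis using vsmult_eq_zero_iff by blast
qed

lemma l_inf_iff: "x \<noteq> (0,0,0) \<Longrightarrow> pt x \<in> l_inf \<longleftrightarrow> snd (snd x) = 0"
proof
  assume x: "x \<noteq> (0,0,0)" and "pt x \<in> l_inf"
  then obtain a b where "pt x = pt (a,b,0)" unfolding l_inf_def by blast
  with pt_eq x obtain c where "x = vsmult c (a,b,0)" by blast
  then show "snd (snd x) = 0" by (simp add: vsmult_def)
next
  assume "x \<noteq> (0,0,0)" and "snd (snd x) = 0"
  moreover obtain a b c where "x = (a,b,c)" by (cases x)
  ultimately show "pt x \<in> l_inf" unfolding l_inf_def by auto
qed

lemma subplane_lincomb: "subplane K u v z = {pt (lincomb u v z a) | a. inK3 K a \<and> a \<noteq> (0,0,0)}"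
  unfolding subplane_def lincomb_def inK3_def by force

lemma subplane_mono: "L \<subseteq> K \<Longrightarrow> subplane L u v z \<subseteq> subplane K u v z"
  unfolding subplane_def by blast

lemma subplane_point_rep:
  assumes "pt e \<in> subplane K u v z" "e \<noteq> (0,0,0)"
  shows "\<exists>a c. inK3 K a \<and> c \<noteq> 0 \<and> e = vsmult c (lincomb u v z a)"
proof -
  from assms(1) obtain a where a: "pt e = pt (lincomb u v z a)" "inK3 K a"
    unfolding subplane_lincomb by blast
  with pt_eq assms(2) show ?thesis by blast
qed

lemma subplane_scale:
  "c \<noteq> 0 \<Longrightarrow> subplane K (vsmult c u) (vsmult c v) (vsmult c z) = subplane K u v z"
  unfolding subplane_lincomb lincomb_scaled_all by (simp add: pt_smult)

lemma subplane_change_basis: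
  assumes K: "is_subfield K" and a: "inK3 K a1" "inK3 K a2" "inK3 K a3"
    and d: "det3 a1 a2 a3 \<noteq> 0"
  shows "subplane K (lincomb u v z a1) (lincomb u v z a2) (lincomb u v z a3) = subplane K u v z"
  unfolding subplane_lincomb lincomb_comp
proof (intro equalityI subsetI)
  fix P assume "P \<in> {pt (lincomb u v z (lincomb a1 a2 a3 x)) | x. inK3 K x \<and> x \<noteq> (0,0,0)}"
  then obtain x where "P = pt (lincomb u v z (lincomb a1 a2 a3 x))" "inK3 K x" "x \<noteq> (0,0,0)"
    by blast
  moreover from this have "inK3 K (lincomb a1 a2 a3 x)" "lincomb a1 a2 a3 x \<noteq> (0,0,0)"
    using lincomb_in_K[OF K a] lincomb_eq_zero_iff[OF d] by auto
  ultimately show "P \<in> {pt (lincomb u v z b) | b. inK3 K b \<and> b \<noteq> (0,0,0)}" by blast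
next
  fix P assume "P \<in> {pt (lincomb u v z b) | b. inK3 K b \<and> b \<noteq> (0,0,0)}"
  then obtain b where b: "P = pt (lincomb u v z b)" "inK3 K b" "b \<noteq> (0,0,0)" by blast
  then obtain x where "inK3 K x" "b = lincomb a1 a2 a3 x" using cramer_in_K[OF K a d] by blast
  moreover from this have "x \<noteq> (0,0,0)" using b(3) lincomb_zero by metis
  ultimately show "P \<in> {pt (lincomb u v z (lincomb a1 a2 a3 x)) | x. inK3 K x \<and> x \<noteq> (0,0,0)}"
    using b(1) by blast
qed

(* With e_i = c_i * w_i for
   K-rational combinations w_i, the fourth point forces the ratios c_i/c4 into K, so
   e_i/c4 is a K-rational basis of the subplane. *)
lemma frame_lemma:
  assumes K: "is_subfield K" and d: "det3 e1 e2 e3 \<noteq> 0"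
    and h1: "pt e1 \<in> subplane K u v z" and h2: "pt e2 \<in> subplane K u v z"
    and h3: "pt e3 \<in> subplane K u v z" and h4: "pt (lincomb e1 e2 e3 (1,1,1)) \<in> subplane K u v z"
  shows "subplane K e1 e2 e3 = subplane K u v z"
proof -
  have "e1 \<noteq> (0,0,0)" "e2 \<noteq> (0,0,0)" "e3 \<noteq> (0,0,0)"
    using d det3_zero_column by metis+
  moreover have "lincomb e1 e2 e3 (1,1,1) \<noteq> (0,0,0)" using lincomb_eq_zero_iff[OF d] by simp
  ultimately obtain a1 c1 a2 c2 a3 c3 a4 c4 where
    A: "inK3 K a1" "inK3 K a2" "inK3 K a3" "inK3 K a4"
    and C: "c1 \<noteq> 0" "c2 \<noteq> 0" "c3 \<noteq> 0" "c4 \<noteq> 0"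
    and E0: "e1 = vsmult c1 (lincomb u v z a1)" "e2 = vsmult c2 (lincomb u v z a2)"
      "e3 = vsmult c3 (lincomb u v z a3)" "lincomb e1 e2 e3 (1,1,1) = vsmult c4 (lincomb u v z a4)"
    using subplane_point_rep h1 h2 h3 h4 by meson
  then have E: "e1 = lincomb u v z (vsmult c1 a1)" "e2 = lincomb u v z (vsmult c2 a2)"
      "e3 = lincomb u v z (vsmult c3 a3)" "lincomb e1 e2 e3 (1,1,1) = lincomb u v z (vsmult c4 a4)"
    by (simp_all only: lincomb_smult)
  have "det3 e1 e2 e3 = det3 u v z * (c1*c2*c3*det3 a1 a2 a3)"
    unfolding E(1-3) det3_mult det3_smult ..
  then have du: "det3 u v z \<noteq> 0" and da: "det3 a1 a2 a3 \<noteq> 0" using d by auto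
  have "lincomb u v z (vsmult c4 a4) = lincomb u v z (lincomb a1 a2 a3 (c1, c2, c3))"
    unfolding E(4)[symmetric] unfolding E(1-3) lincomb_comp lincomb_scaled_vectors by simp
  then have "vsmult c4 a4 = lincomb a1 a2 a3 (c1, c2, c3)" by (rule lincomb_inj[OF du])
  then have "vsmult (1/c4) (vsmult c4 a4) = lincomb a1 a2 a3 (vsmult (1/c4) (c1, c2, c3))"
    by (simp only: lincomb_smult)
  moreover have "vsmult (1/c4) (vsmult c4 a4) = a4" using C(4) by (simp add: vsmult_def)
  moreover have "vsmult (1/c4) (c1, c2, c3) = (c1/c4, c2/c4, c3/c4)" by (simp add: vsmult_def)
  ultimately have "a4 = lincomb a1 a2 a3 (c1/c4, c2/c4, c3/c4)" by simp
  then have "inK3 K (c1/c4, c2/c4, c3/c4)" using coordinates_in_K[OF K A(1-3) da] A(4) by metis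
  then have r: "c1/c4 \<in> K" "c2/c4 \<in> K" "c3/c4 \<in> K" unfolding inK3_def by simp_all
  define b1 b2 b3 where "b1 = vsmult (c1/c4) a1" and "b2 = vsmult (c2/c4) a2" and "b3 = vsmult (c3/c4) a3"
  have b: "inK3 K b1" "inK3 K b2" "inK3 K b3"
    unfolding b1_def b2_def b3_def using inK3_smult[OF K] r A by simp_all
  have db: "det3 b1 b2 b3 \<noteq> 0" using da C unfolding b1_def b2_def b3_def det3_smult by simp
  have "e1 = vsmult c4 (lincomb u v z b1)" "e2 = vsmult c4 (lincomb u v z b2)"
    "e3 = vsmult c4 (lincomb u v z b3)"
    unfolding E(1-3) b1_def b2_def b3_def lincomb_smult using C(4) by (simp_all add: vsmult_def)
  then show ?thesis using subplane_scale[OF C(4)] subplane_change_basis[OF K b db] by simp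
qed

(* A finite field is a vector space over each of its subfields K, so its
   subspaces have cardinality a power of |K|. *)
definition K_subspace :: "'a::field set \<Rightarrow> 'a set \<Rightarrow> bool" where
  "K_subspace K W \<longleftrightarrow> 0 \<in> W \<and> (\<forall>x\<in>W. \<forall>y\<in>W. x + y \<in> W) \<and> (\<forall>c\<in>K. \<forall>x\<in>W. c * x \<in> W)"

definition adjoin :: "'a::field set \<Rightarrow> 'a set \<Rightarrow> 'a \<Rightarrow> 'a set" where
  "adjoin K W x = (\<lambda>(w, c). w + c * x) ` (W \<times> K)"

lemma adjoin_subspace:
  assumes K: "is_subfield K" and W: "K_subspace K W"
  shows "K_subspace K (adjoin K W x)" "insert x W \<subseteq> adjoin K W x"
proof -
  have W0: "0 \<in> W" and Wadd: "\<And>y z. y \<in> W \<Longrightarrow> z \<in> W \<Longrightarrow> y + z \<in> W"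
    and Wsmult: "\<And>c y. c \<in> K \<Longrightarrow> y \<in> W \<Longrightarrow> c * y \<in> W"
    using W unfolding K_subspace_def by blast+
  have mem: "w + c * x \<in> adjoin K W x" if "w \<in> W" "c \<in> K" for w c
    unfolding adjoin_def using that by force
  show "insert x W \<subseteq> adjoin K W x"
    using mem[OF W0 subfield_closed(2)[OF K]] mem[OF _ subfield_closed(1)[OF K]] by auto
  show "K_subspace K (adjoin K W x)"
    unfolding K_subspace_def
  proof (intro conjI ballI)
    show "0 \<in> adjoin K W x" using mem[OF W0 subfield_closed(1)[OF K]] by simp
  next
    fix y1 y2 assume "y1 \<in> adjoin K W x" "y2 \<in> adjoin K W x"
    then obtain w1 c1 w2 c2 where "y1 = w1 + c1 * x" "w1 \<in> W" "c1 \<in> K"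
      "y2 = w2 + c2 * x" "w2 \<in> W" "c2 \<in> K" unfolding adjoin_def by auto
    then have "y1 + y2 = (w1 + w2) + (c1 + c2) * x" by (simp add: algebra_simps)
    then show "y1 + y2 \<in> adjoin K W x"
      using mem Wadd subfield_closed(3)[OF K] \<open>w1 \<in> W\<close> \<open>w2 \<in> W\<close> \<open>c1 \<in> K\<close> \<open>c2 \<in> K\<close>
      by metis
  next
    fix k y assume k: "k \<in> K" and "y \<in> adjoin K W x"
    then obtain w c where "y = w + c * x" "w \<in> W" "c \<in> K" unfolding adjoin_def by auto
    then have "k * y = k * w + (k * c) * x" by (simp add: algebra_simps)
    then show "k * y \<in> adjoin K W x"
      using mem Wsmult k subfield_closed(4)[OF K] \<open>w \<in> W\<close> \<open>c \<in> K\<close> by metis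
  qed
qed

(* Adjoining a vector outside W multiplies the cardinality by |K|: w + c*x determines
   (w, c), since otherwise x would lie in W. *)
lemma card_adjoin:
  assumes K: "is_subfield K" and W: "K_subspace K W" and x: "x \<notin> W"
  shows "card (adjoin K W x) = card W * card K"
proof -
  have "inj_on (\<lambda>(w, c). w + c * x) (W \<times> K)"
  proof (rule inj_onI, clarify)
    fix w c w' c' assume h: "w \<in> W" "c \<in> K" "w' \<in> W" "c' \<in> K" "w + c * x = w' + c' * x"
    show "w = w' \<and> c = c'"
    proof (rule ccontr)
      assume "\<not> (w = w' \<and> c = c')"
      with h(5) have ne: "c \<noteq> c'" by auto
      have "(c - c') * x = w' + (- 1) * w" using h(5) by (simp add: algebra_simps)
      then have "x = inverse (c - c') * (w' + (- 1) * w)"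
        using ne by (metis mult.assoc mult_1 left_inverse right_minus_eq)
      then have "x = inverse (c - c') * w' + inverse (c - c') * (- 1 * w)"
        by (simp only: distrib_left)
      moreover have "inverse (c - c') \<in> K" "- 1 \<in> K"
        using K h(2,4) by (simp_all add: subfield_closed subfield_diff_divide)
      ultimately have "x \<in> W" using W h(1,3) unfolding K_subspace_def by metis
      with x show False ..
    qed
  qed
  then show ?thesis unfolding adjoin_def by (simp add: card_image card_cartesian_product)
qed

(* Every subspace of a finite field has cardinality a power of |K|: grow a subspace W of V
   one vector at a time until it fills V. *)
lemma card_subspace_power:
  fixes K V :: "'a::{field,finite} set"
  assumes K: "is_subfield K" and V: "K_subspace K V"
  shows "\<exists>d. card V = card K ^ d"
proof -
  have "\<exists>d. card V = card W * card K ^ d" if "K_subspace K W" "W \<subseteq> V" for W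
    using that
  proof (induction "card V - card W" arbitrary: W rule: less_induct)
    case (less W)
    show ?case
    proof (cases "W = V")
      case True
      then show ?thesis by (intro exI[of _ 0]) simp
    next
      case False
      with less.prems(2) obtain x where x: "x \<in> V" "x \<notin> W" by blast
      let ?W' = "adjoin K W x"
      have W': "K_subspace K ?W'" "insert x W \<subseteq> ?W'"
        using adjoin_subspace[OF K less.prems(1)] by blast+
      have "?W' \<subseteq> V"
        using V x(1) less.prems(2) unfolding adjoin_def K_subspace_def by auto
      moreover have "card W < card ?W'" using W'(2) x(2) by (intro psubset_card_mono) auto
      ultimately have "card V - card ?W' < card V - card W" using card_mono[of V ?W'] by simp
      then obtain d where "card V = card ?W' * card K ^ d" using less.hyps W'(1) \<open>?W' \<subseteq> V\<close> by blast
      then have "card V = card W * card K ^ Suc d"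
        using card_adjoin[OF K less.prems(1) x(2)] by simp
      then show ?thesis ..
    qed
  qed
  moreover have "K_subspace K {0}" "{0} \<subseteq> V" using V unfolding K_subspace_def by simp_all
  ultimately show ?thesis by fastforce
qed

(* If |F| = q and the whole field has q^n elements, then every intermediate field L has
   q^k elements with k dividing n (the degree of the field over F is multiplicative). *)
lemma intermediate_field_card:
  fixes F L :: "'a::{field,finite} set"
  assumes F: "is_subfield F" and L: "is_subfield L" and FL: "F \<subseteq> L"
    and q: "card F = q" and n: "card (UNIV :: 'a set) = q ^ n"
  shows "\<exists>k. card L = q ^ k \<and> k dvd n"
proof -
  have "K_subspace F L" unfolding K_subspace_def using FL subfield_closed[OF L] by blast
  then obtain k where k: "card L = q ^ k" using card_subspace_power[OF F] q by blast
  have "K_subspace L UNIV" unfolding K_subspace_def by simp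
  then obtain m where "card (UNIV :: 'a set) = card L ^ m" using card_subspace_power[OF L] by blast
  then have "q ^ n = q ^ (k * m)" using n k by (simp add: power_mult)
  moreover have "q \<ge> 2" using card_subfield_ge2[OF F] q by simp
  ultimately have "n = k * m" by (simp add: power_inject_exp)
  then show ?thesis using k by auto
qed

lemma subfield_Inter: "(\<And>K. K \<in> KK \<Longrightarrow> is_subfield K) \<Longrightarrow> is_subfield (\<Inter>KK)"
  unfolding is_subfield_def by blast

lemma gen_subfield:
  assumes "is_subfield F"
  shows "is_subfield (gen_subfield F \<omega>)" "F \<subseteq> gen_subfield F \<omega>" "\<omega> \<in> gen_subfield F \<omega>"
    and "\<And>K. is_subfield K \<Longrightarrow> F \<subseteq> K \<Longrightarrow> \<omega> \<in> K \<Longrightarrow> gen_subfield F \<omega> \<subseteq> K"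
  unfolding gen_subfield_def by (auto intro: subfield_Inter)

(* The K-subplane spanned by (1,0,0), (0,1,omega), (0,0,1); it consists of the points
   (s, t, t*omega + w) with s, t, w in K.  For K = F it is pi_omega0 itself. *)
definition plane_omega :: "'a::field set \<Rightarrow> 'a \<Rightarrow> 'a vec3 set set" where
  "plane_omega K \<omega> = subplane K (1,0,0) (0,1,\<omega>) (0,0,1)"

lemma det3_frame: "det3 (1,0,0) (0,1,\<omega>) (0,0,1::'a::field) = 1"
  by (simp add: det3_def)

lemma lincomb_frame: "lincomb (1,0,0) (0,1,\<omega>) (0,0,1) (s,t,w) = (s, t, t*\<omega> + w)"
  by (simp add: lincomb_def vadd_def vsmult_def)

lemma plane_omega_points:
  "plane_omega K \<omega> = {pt (s, t, t*\<omega> + w) | s t w. s \<in> K \<and> t \<in> K \<and> w \<in> K \<and> (s,t,w) \<noteq> (0,0,0)}"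
  unfolding plane_omega_def subplane_def using lincomb_frame[of \<omega>] unfolding lincomb_def by simp

lemma plane_omega_is_subplane: "is_subplane_over K (plane_omega K \<omega>)"
proof -
  have "lin_indep3 (1,0,0) (0,1,\<omega>) (0,0,1)" unfolding lin_indep3_def vadd_def vsmult_def by auto
  then show ?thesis unfolding is_subplane_over_def plane_omega_def by blast
qed

lemma pi_omega0_subset: "F \<subseteq> K \<Longrightarrow> pi_omega0 F \<omega> \<subseteq> plane_omega K \<omega>"
  unfolding plane_omega_points pi_omega0_def by blast

lemma pi_omega0_mem:
  "s \<in> F \<Longrightarrow> t \<in> F \<Longrightarrow> u \<in> F \<Longrightarrow> (s,t,u) \<noteq> (0,0,0) \<Longrightarrow> pt (s, u, u*\<omega> + t) \<in> pi_omega0 F \<omega>"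
  unfolding pi_omega0_def by blast

(* The points of plane_omega K omega on l_inf are (1,0,0) and, only when omega is in K,
   the points (s,1,0) with s in K: a point (s, t, t*omega + w) with t nonzero lies on l_inf
   exactly when omega = -w/t. *)
lemma plane_omega_l_inf:
  assumes K: "is_subfield K"
  shows "plane_omega K \<omega> \<inter> l_inf =
    insert (pt (1,0,0)) {pt (s,1,0) | s. s \<in> K \<and> \<omega> \<in> K}"
proof (intro equalityI subsetI)
  fix P assume P: "P \<in> plane_omega K \<omega> \<inter> l_inf"
  then obtain s t w where h: "P = pt (s, t, t*\<omega> + w)" "s \<in> K" "t \<in> K" "w \<in> K" "(s,t,w) \<noteq> (0,0,0)"
    unfolding plane_omega_points by blast
  have "(s, t, t*\<omega> + w) \<noteq> (0,0,0)" using h(5) by auto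
  from l_inf_iff[OF this] have z: "t*\<omega> + w = 0" using h(1) P by simp
  show "P \<in> insert (pt (1,0,0)) {pt (s,1,0) | s. s \<in> K \<and> \<omega> \<in> K}"
  proof (cases "t = 0")
    case True
    then have s: "s \<noteq> 0" and "(s, t, t*\<omega> + w) = vsmult s (1,0,0)"
      using z h(5) by (auto simp: vsmult_def)
    then have "P = pt (1,0,0)" using h(1) pt_smult[OF s] by simp
    then show ?thesis by blast
  next
    case False
    have "t * \<omega> = - w" using z by (simp add: eq_neg_iff_add_eq_0)
    have "\<omega> = (t * \<omega>) / t" using False by simp
    also have "\<dots> = - w / t" using \<open>t * \<omega> = - w\<close> by simp
    finally have "\<omega> \<in> K" using h(3,4) subfield_closed(5)[OF K] subfield_diff_divide[OF K] by simp
    have "(s, t, t*\<omega> + w) = vsmult t (s/t,1,0)" using z False by (simp add: vsmult_def)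
    then have "P = pt (s/t,1,0)" using h(1) pt_smult[OF False] by simp
    moreover have "s/t \<in> K" using h(2,3) subfield_diff_divide[OF K] by simp
    ultimately show ?thesis using \<open>\<omega> \<in> K\<close> by blast
  qed
next
  fix P assume "P \<in> insert (pt (1,0,0)) {pt (s,1,0) | s. s \<in> K \<and> \<omega> \<in> K}"
  then consider "P = pt (1,0,0)" | s where "s \<in> K" "\<omega> \<in> K" "P = pt (s,1,0)" by blast
  then show "P \<in> plane_omega K \<omega> \<inter> l_inf"
  proof cases
    case 1
    have "pt (1,0,0) \<in> plane_omega K \<omega>" unfolding plane_omega_points
      by (rule CollectI, rule exI[of _ 1], rule exI[of _ 0], rule exI[of _ 0])
        (simp add: subfield_closed[OF K])
    then show ?thesis using 1 l_inf_iff[of "(1,0,0)"] by simp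
  next
    case 2
    have "pt (s,1,0) \<in> plane_omega K \<omega>" unfolding plane_omega_points
      by (rule CollectI, rule exI[of _ s], rule exI[of _ 1], rule exI[of _ "- \<omega>"])
        (simp add: 2 subfield_closed[OF K])
    then show ?thesis using 2 l_inf_iff[of "(s,1,0)"] by simp
  qed
qed

lemma plane_omega_secant_iff:
  fixes K :: "'a::{field,finite} set"
  assumes K: "is_subfield K"
  shows "secant K (plane_omega K \<omega>) \<longleftrightarrow> \<omega> \<in> K"
proof
  assume "\<omega> \<in> K"
  then have eq: "plane_omega K \<omega> \<inter> l_inf = insert (pt (1,0,0)) ((\<lambda>s. pt (s,1,0)) ` K)"
    unfolding plane_omega_l_inf[OF K] by auto
  have inj: "inj_on (\<lambda>s. pt (s, 1::'a, 0)) K"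
  proof (rule inj_onI)
    fix s s' assume "pt (s, 1::'a, 0) = pt (s', 1, 0)"
    from pt_eq[OF this] obtain c where "(s, 1::'a, 0::'a) = vsmult c (s', 1, 0)" by auto
    then show "s = s'" by (simp add: vsmult_def)
  qed
  have "pt (1,0,0) \<notin> (\<lambda>s. pt (s, 1::'a, 0)) ` K"
  proof
    assume "pt (1,0,0) \<in> (\<lambda>s. pt (s, 1::'a, 0)) ` K"
    then obtain s where "pt (1,0,0) = pt (s, 1::'a, 0)" by blast
    from pt_eq[OF this] obtain c where "(1::'a, 0::'a, 0::'a) = vsmult c (s, 1, 0)" by auto
    then show False by (auto simp: vsmult_def)
  qed
  then show "secant K (plane_omega K \<omega>)"
    unfolding secant_def eq using card_image[OF inj] by simp
next
  assume sec: "secant K (plane_omega K \<omega>)"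
  show "\<omega> \<in> K"
  proof (rule ccontr)
    assume "\<omega> \<notin> K"
    then have "plane_omega K \<omega> \<inter> l_inf = {pt (1,0,0)}" unfolding plane_omega_l_inf[OF K] by simp
    then show False using sec card_subfield_ge2[OF K] unfolding secant_def by simp
  qed
qed

lemma plane_omega_first_coordinate:
  assumes K: "is_subfield K" and P: "pt (f,0,1) \<in> plane_omega K \<omega>"
  shows "f \<in> K"
proof -
  obtain s t w where h: "pt (f,0,1) = pt (s, t, t*\<omega> + w)" "s \<in> K" "w \<in> K"
    using P unfolding plane_omega_points by blast
  from pt_eq[OF h(1)] obtain c where "(f,0,1) = vsmult c (s, t, t*\<omega> + w)" by auto
  then have f: "f = c * s" and "c * t = 0" and "c * (t*\<omega> + w) = 1" by (simp_all add: vsmult_def)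
  then have "c \<noteq> 0" "t = 0" by auto
  with \<open>c * (t*\<omega> + w) = 1\<close> have "c * w = 1" by simp
  then have "w \<noteq> 0" "c = 1 / w" by (auto simp: eq_divide_eq mult.commute)
  then have "f = s / w" using f by simp
  then show ?thesis using subfield_diff_divide(2)[OF K h(2,3)] by simp
qed

(* Any K-subplane S containing pi_omega0 F omega contains its frame (1,0,0), (0,1,omega),
   (0,0,1), (1,1,omega+1), so by the frame lemma it equals plane_omega K omega; its points
   (f,0,1) then show that F lies in K. *)
lemma subplane_containing_pi_omega0:
  assumes F: "is_subfield F" and K: "is_subfield K"
    and S: "is_subplane_over K S" and pi: "pi_omega0 F \<omega> \<subseteq> S"
  shows "S = plane_omega K \<omega>" and "F \<subseteq> K"
proof -
  obtain u v z where S_eq: "S = subplane K u v z" using S unfolding is_subplane_over_def by blast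
  have pi_mem: "pt (s, u, u*\<omega> + t) \<in> S"
    if "s \<in> F" "t \<in> F" "u \<in> F" "(s,t,u) \<noteq> (0,0,0)" for s t u
    using pi pi_omega0_mem[OF that] by blast
  note F01 = subfield_closed(1,2)[OF F]
  have "pt (1,0,0) \<in> S" "pt (0,1,\<omega>) \<in> S" "pt (0,0,1) \<in> S"
    "pt (lincomb (1,0,0) (0,1,\<omega>) (0,0,1) (1,1,1)) \<in> S"
    using pi_mem[of 1 0 0] pi_mem[of 0 0 1] pi_mem[of 0 1 0] pi_mem[of 1 1 1] F01
    by (simp_all add: lincomb_frame)
  then show S_frame: "S = plane_omega K \<omega>"
    using frame_lemma[OF K, of "(1,0,0)" "(0,1,\<omega>)" "(0,0,1)" u v z] det3_frame[of \<omega>]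
    unfolding S_eq plane_omega_def by simp
  show "F \<subseteq> K"
  proof
    fix f assume "f \<in> F"
    then have "pt (f,0,1) \<in> S" using pi_mem[of f 1 0] F01 by simp
    then show "f \<in> K" using plane_omega_first_coordinate[OF K] S_frame by simp
  qed
qed

theorem lemma3p3:
  fixes F :: "'a::{field,finite} set" and q n :: nat and \<omega> :: 'a
  assumes "is_subfield F" and "card F = q" and "card (UNIV :: 'a set) = q ^ n"
  shows "\<exists>k. card (gen_subfield F \<omega>) = q ^ k \<and> k dvd n \<and>
    (\<exists>S0. is_subplane_over (gen_subfield F \<omega>) S0 \<and> secant (gen_subfield F \<omega>) S0 \<and>
          pi_omega0 F \<omega> \<subseteq> S0 \<and>
          (\<forall>K j S. is_subfield K \<and> card K = q ^ j \<and> j dvd n \<and>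
                   is_subplane_over K S \<and> secant K S \<and> pi_omega0 F \<omega> \<subseteq> S
                   \<longrightarrow> S0 \<subseteq> S))"
proof -
  define L where "L = gen_subfield F \<omega>"
  note L = gen_subfield[OF assms(1), where \<omega> = \<omega>, folded L_def]
  obtain k where k: "card L = q ^ k" "k dvd n"
    using intermediate_field_card[OF assms(1) L(1,2) assms(2,3)] by blast
  have minimal: "plane_omega L \<omega> \<subseteq> S"
    if "is_subfield K" "is_subplane_over K S" "secant K S" "pi_omega0 F \<omega> \<subseteq> S" for K S
  proof -
    have "S = plane_omega K \<omega>" "F \<subseteq> K"
      using subplane_containing_pi_omega0[OF assms(1) that(1,2,4)] by blast+
    moreover from this have "\<omega> \<in> K" using plane_omega_secant_iff[OF that(1)] that(3) by simp
    ultimately show ?thesis using L(4)[OF that(1)] plane_omega_def subplane_mono by metis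
  qed
  show ?thesis unfolding L_def[symmetric]
    using k plane_omega_is_subplane plane_omega_secant_iff[OF L(1)] L(3)
      pi_omega0_subset[OF L(2)] minimal by blast
qed

end
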